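(* Let $R$ be a commutative Bezout domain. The following are equivalent: (1) $R$ has stable range 1.5; (2) $GL_2(R)=\mathbf G_\Phi\, U_2^{lw}(R)\,U_2^{up}(R)$ for every nonsingular $2\times2$ $d$-matrix $\Phi$; (3) $GL_n(R)=\mathbf G_\Phi\, U_n^{lw}(R)\,U_n^{up}(R)$ for every $n\ge2$ and every nonsingular $n\times n$ $d$-matrix $\Phi$.
   Context: A commutative Bezout domain is a commutative integral domain with $1\ne0$ in which every finitely generated ideal is principal. It has stable range 1.5 if for all $a,b\in R$ and $c\in R\setminus\{0\}$ with $(a,b,c)=1$ there is $r\in R$ with $(a+br,c)=1$. A $d$-matrix is a diagonal matrix $\mathrm{diag}(\varphi_1,\dots,\varphi_n)$ with $\varphi_i\mid\varphi_{i+1}$. $\mathbf G_\Phi=\{H\in GL_n(R):\ \exists K\in GL_n(R),\ H\Phi=\Phi K\}$. $U_n^{lw}(R)$ and $U_n^{up}(R)$ denote the groups of lower and upper unitriangular $n\times n$ matrices (triangular with $1$'s on the diagonal). For sets of matrices, $XYZ=\{xyz: x\in X,y\in Y,z\in Z\}$. *)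

theory Defs
  imports "Jordan_Normal_Form.Determinant"
begin

definition gen_ideal :: "'a::comm_ring_1 set \<Rightarrow> 'a set" where
  "gen_ideal S = {x. \<exists>f. x = (\<Sum>s\<in>S. f s * s)}"

definition bezout_domain :: "'a::idom itself \<Rightarrow> bool" where
  "bezout_domain _ \<longleftrightarrow> (\<forall>S::'a set. finite S \<longrightarrow> (\<exists>d. gen_ideal S = gen_ideal {d}))"

definition stable_range_15 :: "'a::idom itself \<Rightarrow> bool" where
  "stable_range_15 _ \<longleftrightarrow> (\<forall>a b c::'a. c \<noteq> 0 \<longrightarrow> gen_ideal {a, b, c} = UNIV \<longrightarrow>
      (\<exists>r. gen_ideal {a + b * r, c} = UNIV))"

definition GL :: "nat \<Rightarrow> 'a::comm_ring_1 mat set" where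
  "GL n = {A. A \<in> carrier_mat n n \<and> invertible_mat A}"

definition G_Phi :: "nat \<Rightarrow> 'a::comm_ring_1 mat \<Rightarrow> 'a mat set" where
  "G_Phi n \<Phi> = {H. H \<in> GL n \<and> (\<exists>K\<in>GL n. H * \<Phi> = \<Phi> * K)}"

definition U_lw :: "nat \<Rightarrow> 'a::comm_ring_1 mat set" where
  "U_lw n = {A. A \<in> carrier_mat n n \<and> (\<forall>i<n. A $$ (i, i) = 1) \<and>
      (\<forall>i<n. \<forall>j<n. i < j \<longrightarrow> A $$ (i, j) = 0)}"

definition U_up :: "nat \<Rightarrow> 'a::comm_ring_1 mat set" where
  "U_up n = {A. A \<in> carrier_mat n n \<and> (\<forall>i<n. A $$ (i, i) = 1) \<and>
      (\<forall>i<n. \<forall>j<n. j < i \<longrightarrow> A $$ (i, j) = 0)}"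

definition d_matrix :: "nat \<Rightarrow> 'a::comm_ring_1 mat \<Rightarrow> bool" where
  "d_matrix n \<Phi> \<longleftrightarrow> \<Phi> \<in> carrier_mat n n \<and>
      (\<forall>i<n. \<forall>j<n. i \<noteq> j \<longrightarrow> \<Phi> $$ (i, j) = 0) \<and>
      (\<forall>i. i + 1 < n \<longrightarrow> \<Phi> $$ (i, i) dvd \<Phi> $$ (i + 1, i + 1))"

definition set_prod3 :: "'a::comm_ring_1 mat set \<Rightarrow> 'a mat set \<Rightarrow> 'a mat set \<Rightarrow> 'a mat set" where
  "set_prod3 X Y Z = {x * y * z | x y z. x \<in> X \<and> y \<in> Y \<and> z \<in> Z}"

end

(*
  (1) implies (3).  Let c be the last diagonal entry of \<Phi>.  Because the diagonal of \<Phi> is a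
  divisor chain, every invertible H whose entries below the diagonal are divisible by c lies in
  G_\<Phi>.  For A in GL_n, such a product A U L with U upper and L lower unitriangular is built by
  induction on n: the first n - 1 entries of the last row generate a principal ideal (d), and
  (a_nn, d, c) = 1 because det A is a unit modulo c; stable range 1.5 turns the corner into a unit mod c
  by an upper unitriangular column operation, a lower one then clears the rest of the last row
  modulo c, and the leading minor, whose determinant is still a unit modulo c, is handled by
  induction.  Finally A = (A U L) L^-1 U^-1.

  (2) implies (1).  Given (a, b, c) = 1, write a = a' d, b = b' d with d = \<alpha> a + \<beta> b, so that the
  matrix with rows (\<alpha>, -\<beta>) and (b', a') has determinant 1.  Decomposing it as H L U with
  \<Phi> = diag(1, c), the bottom row gives a' - b' u = H_22, and c divides H_21; hence H_22 is
  coprime to c, and so is a - b u = d (a' - b' u).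
*)
theory Submission
  imports Defs
begin

section \<open>Comaximal elements in Bezout domains\<close>

lemma gen_ideal_insert:
  assumes "finite S"
  shows "gen_ideal (insert a S) = {x * a + y | x y. y \<in> gen_ideal S}"
proof (cases "a \<in> S")
  case True
  have shift: "(\<Sum>s\<in>S. (g(a := g a + x)) s * s) = x * a + (\<Sum>s\<in>S. g s * s)" for g x
  proof -
    have "(\<Sum>s\<in>S - {a}. (g(a := g a + x)) s * s) = (\<Sum>s\<in>S - {a}. g s * s)"
      by (rule sum.cong) auto
    then show ?thesis using True assms by (simp add: sum.remove algebra_simps)
  qed
  show ?thesis
  proof (intro equalityI subsetI)
    fix z assume "z \<in> gen_ideal (insert a S)"
    then have "z = 0 * a + z" "z \<in> gen_ideal S" using True by (simp_all add: insert_absorb)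
    then show "z \<in> {x * a + y | x y. y \<in> gen_ideal S}" by blast
  next
    fix z assume "z \<in> {x * a + y | x y. y \<in> gen_ideal S}"
    then obtain x g where "z = x * a + (\<Sum>s\<in>S. g s * s)" unfolding gen_ideal_def by blast
    then have "z = (\<Sum>s\<in>S. (g(a := g a + x)) s * s)" by (simp only: shift)
    then show "z \<in> gen_ideal (insert a S)" using True unfolding gen_ideal_def by (auto simp: insert_absorb)
  qed
next
  case False
  have upd: "(\<Sum>s\<in>insert a S. (g(a := x)) s * s) = x * a + (\<Sum>s\<in>S. g s * s)" for g x
  proof -
    have "(\<Sum>s\<in>S. (g(a := x)) s * s) = (\<Sum>s\<in>S. g s * s)"
      using False by (intro sum.cong) auto
    then show ?thesis using False assms by simp
  qed
  show ?thesis
  proof (intro equalityI subsetI)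
    fix z assume "z \<in> gen_ideal (insert a S)"
    then obtain f where "z = (\<Sum>s\<in>insert a S. f s * s)" unfolding gen_ideal_def by blast
    then have "z = f a * a + (\<Sum>s\<in>S. f s * s)" using False assms by simp
    then show "z \<in> {x * a + y | x y. y \<in> gen_ideal S}" unfolding gen_ideal_def by blast
  next
    fix z assume "z \<in> {x * a + y | x y. y \<in> gen_ideal S}"
    then obtain x g where "z = x * a + (\<Sum>s\<in>S. g s * s)" unfolding gen_ideal_def by blast
    then have "z = (\<Sum>s\<in>insert a S. (g(a := x)) s * s)" by (simp only: upd)
    then show "z \<in> gen_ideal (insert a S)" unfolding gen_ideal_def by blast
  qed
qed

lemma gen_ideal_empty: "gen_ideal {} = {0}"
  by (simp add: gen_ideal_def)

lemma gen_ideal_pair: "gen_ideal {a::'a::comm_ring_1, b} = {x * a + y * b | x y. True}"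
  by (auto simp: gen_ideal_insert gen_ideal_empty)

lemma gen_ideal_triple:
  "gen_ideal {a::'a::comm_ring_1, b, c} = {x * a + (y * b + z * c) | x y z. True}"
proof -
  have "gen_ideal {a, b, c} = {x * a + y | x y. y \<in> gen_ideal {b, c}}"
    by (simp add: gen_ideal_insert)
  then show ?thesis unfolding gen_ideal_pair by blast
qed

lemma gen_ideal_singleton: "gen_ideal {a::'a::comm_ring_1} = {x * a | x. True}"
  by (auto simp: gen_ideal_insert gen_ideal_empty)

lemma gen_ideal_eq_UNIV_iff: "gen_ideal S = UNIV \<longleftrightarrow> 1 \<in> gen_ideal S"
proof
  assume "1 \<in> gen_ideal S"
  then obtain f where "1 = (\<Sum>s\<in>S. f s * s)" unfolding gen_ideal_def by blast
  then have "t = (\<Sum>s\<in>S. (t * f s) * s)" for t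
    by (metis (no_types, lifting) mult.assoc mult.right_neutral sum.cong sum_distrib_left)
  then have "t \<in> gen_ideal S" for t unfolding gen_ideal_def mem_Collect_eq
    by (rule exI[of _ "\<lambda>s. t * f s"])
  then show "gen_ideal S = UNIV" by blast
qed simp

definition comaximal :: "'a::comm_ring_1 \<Rightarrow> 'a \<Rightarrow> bool" where
  "comaximal a b \<longleftrightarrow> (\<exists>x y. x * a + y * b = 1)"

lemma gen_ideal_pair_eq_UNIV_iff: "gen_ideal {a, b} = UNIV \<longleftrightarrow> comaximal a b"
  unfolding gen_ideal_eq_UNIV_iff by (simp add: gen_ideal_pair comaximal_def eq_commute[of 1])

lemma gen_ideal_triple_eq_UNIV_iff:
  "gen_ideal {a, b, c} = UNIV \<longleftrightarrow> (\<exists>x y z. x * a + y * b + z * c = (1::'a::comm_ring_1))"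
  unfolding gen_ideal_eq_UNIV_iff by (simp add: gen_ideal_triple eq_commute[of 1] add.assoc)

lemma comaximal_mult: "comaximal a c \<Longrightarrow> comaximal b c \<Longrightarrow> comaximal (a * b) c"
proof -
  assume "comaximal a c" "comaximal b c"
  then obtain x y x' y' where "x * a + y * c = 1" "x' * b + y' * c = 1"
    unfolding comaximal_def by blast
  then have "(x * a + y * c) * (x' * b + y' * c) = 1" by simp
  then have "(x * x') * (a * b) + (x * a * y' + y * x' * b + y * y' * c) * c = 1"
    by (simp add: algebra_simps)
  then show "comaximal (a * b) c" unfolding comaximal_def by blast
qed

lemma comaximal_if_dvd_one: "a dvd 1 \<Longrightarrow> comaximal a c"
  unfolding comaximal_def by (metis add.right_neutral dvdE mult.commute mult_zero_left)

lemma bezout_domain_gcd: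
  assumes "bezout_domain TYPE('a::idom)"
  obtains d x y p' q' where "d = x * p + y * (q::'a)" "p = p' * d" "q = q' * d"
proof -
  obtain d where "gen_ideal {p, q} = gen_ideal {d}"
    using assms finite.emptyI finite_insert unfolding bezout_domain_def by metis
  then have eq: "(\<exists>x y. z = x * p + y * q) \<longleftrightarrow> (\<exists>x. z = x * d)" for z
    unfolding gen_ideal_pair gen_ideal_singleton set_eq_iff by simp
  have "\<exists>x y. d = x * p + y * q"
    by (rule eq[THEN iffD2], rule exI[of _ 1], simp)
  moreover have "\<exists>p'. p = p' * d"
    by (rule eq[THEN iffD1], rule exI[of _ 1], rule exI[of _ 0], simp)
  moreover have "\<exists>q'. q = q' * d"
    by (rule eq[THEN iffD1], rule exI[of _ 0], rule exI[of _ 1], simp)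
  ultimately show ?thesis using that by blast
qed

lemma bezout_domain_gcd_family:
  fixes x :: "nat \<Rightarrow> 'a::idom"
  assumes "bezout_domain TYPE('a)"
  shows "\<exists>d w g. d = (\<Sum>j<m. w j * x j) \<and> (\<forall>j<m. x j = g j * d)"
proof (induction m)
  case 0
  show ?case by simp
next
  case (Suc m)
  then obtain d w g where d: "d = (\<Sum>j<m. w j * x j)" and g: "\<forall>j<m. x j = g j * d"
    by blast
  obtain e a b p q where e: "e = a * d + b * x m" "d = p * e" "x m = q * e"
    by (rule bezout_domain_gcd[OF assms])
  define w' where "w' j = (if j < m then a * w j else b)" for j
  define g' where "g' j = (if j < m then g j * p else q)" for j
  have "(\<Sum>j<m. w' j * x j) = a * d"
    unfolding d sum_distrib_left by (rule sum.cong) (simp_all add: w'_def mult.assoc)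
  then have "e = (\<Sum>j<Suc m. w' j * x j)"
    using e(1) by (simp add: w'_def)
  moreover have "\<forall>j<Suc m. x j = g' j * e"
    using g e(2,3) by (simp add: g'_def less_Suc_eq mult.assoc)
  ultimately show ?case by blast
qed

lemma stable_range_15_comaximal:
  assumes "stable_range_15 TYPE('a::idom)" "c \<noteq> 0" "x * a + y * b + z * c = (1::'a)"
  obtains r where "comaximal (a + b * r) c"
proof -
  have "gen_ideal {a, b, c} = UNIV"
    using assms(3) unfolding gen_ideal_triple_eq_UNIV_iff by blast
  then obtain r where "gen_ideal {a + b * r, c} = UNIV"
    using assms(1,2) unfolding stable_range_15_def by blast
  then show ?thesis using that unfolding gen_ideal_pair_eq_UNIV_iff by blast
qed

section \<open>Invertible and unitriangular matrices\<close>

lemma index_mult_mat_sum: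
  assumes "A \<in> carrier_mat n m" "B \<in> carrier_mat m k" "i < n" "j < k"
  shows "(A * B) $$ (i, j) = (\<Sum>l<m. A $$ (i, l) * B $$ (l, j))"
  using assms by (auto simp: scalar_prod_def lessThan_atLeast0 intro!: sum.cong)

lemma index_mult_2x2:
  fixes X :: "'a::comm_ring_1 mat"
  assumes "X \<in> carrier_mat 2 2" "Y \<in> carrier_mat 2 2" "i < 2" "j < 2"
  shows "(X * Y) $$ (i, j) = X $$ (i, 0) * Y $$ (0, j) + X $$ (i, 1) * Y $$ (1, j)"
  unfolding index_mult_mat_sum[OF assms] by (simp add: numeral_2_eq_2)

lemma det_expand_last_row:
  fixes M :: "'a::comm_ring_1 mat"
  assumes M: "M \<in> carrier_mat (Suc n) (Suc n)"
  shows "det M = (\<Sum>j<n. M $$ (n, j) * cofactor M n j) + M $$ (n, n) * det (mat_delete M n n)"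
proof -
  have "cofactor M n n = det (mat_delete M n n)"
    unfolding cofactor_def by (simp add: mult_2[symmetric])
  then show ?thesis using laplace_expansion_row[OF M, of n] by simp
qed

lemma det_2x2:
  fixes A :: "'a::comm_ring_1 mat"
  assumes "A \<in> carrier_mat 2 2"
  shows "det A = A $$ (0, 0) * A $$ (1, 1) - A $$ (0, 1) * A $$ (1, 0)"
  using det_expand_last_row[of A 1] assms
  by (simp add: numeral_2_eq_2 cofactor_def det_single mat_delete_def)

lemma GL_carrier: "A \<in> GL n \<Longrightarrow> A \<in> carrier_mat n n"
  unfolding GL_def by simp

lemma GL_inverse:
  assumes "A \<in> GL n"
  obtains B where "B \<in> carrier_mat n n" "A * B = 1\<^sub>m n" "B * A = 1\<^sub>m n"
proof -
  from assms obtain B where A: "A \<in> carrier_mat n n" and AB: "A * B = 1\<^sub>m n"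
    and BA: "B * A = 1\<^sub>m (dim_row B)"
    unfolding GL_def invertible_mat_def inverts_mat_def by auto
  have "dim_col B = n" using arg_cong[OF AB, of dim_col] by simp
  moreover have "dim_row B = n" using arg_cong[OF BA, of dim_col] A by simp
  ultimately show ?thesis using that AB BA by auto
qed

lemma GL_iff_det_dvd_one: "A \<in> GL n \<longleftrightarrow> A \<in> carrier_mat n n \<and> det A dvd (1::'a::comm_ring_1)"
proof
  assume A: "A \<in> GL n"
  obtain B where B: "B \<in> carrier_mat n n" and AB: "A * B = 1\<^sub>m n"
    using GL_inverse[OF A] by blast
  have "1 = det A * det B"
    using det_mult[OF GL_carrier[OF A] B] AB by simp
  then show "A \<in> carrier_mat n n \<and> det A dvd 1"
    using GL_carrier[OF A] by (auto intro: dvdI)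
next
  assume "A \<in> carrier_mat n n \<and> det A dvd 1"
  then have A: "A \<in> carrier_mat n n" and "det A dvd 1" by auto
  then obtain e where "1 = det A * e" by (elim dvdE)
  then have e: "e * det A = 1" by (simp add: mult.commute)
  define B where "B = e \<cdot>\<^sub>m adj_mat A"
  have adj: "adj_mat A \<in> carrier_mat n n" by (rule adj_mat(1)[OF A])
  have "A * B = 1\<^sub>m n"
    unfolding B_def mult_smult_distrib[OF A adj] adj_mat(2)[OF A]
    by (rule eq_matI) (auto simp: e mult.assoc[symmetric])
  moreover have "B * A = 1\<^sub>m n"
    unfolding B_def mult_smult_assoc_mat[OF adj A] adj_mat(3)[OF A]
    by (rule eq_matI) (auto simp: e mult.assoc[symmetric])
  moreover have "B \<in> carrier_mat n n" unfolding B_def using adj by simp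
  ultimately show "A \<in> GL n"
    unfolding GL_def invertible_mat_def inverts_mat_def using A by auto
qed

lemma GL_mult: "A \<in> GL n \<Longrightarrow> B \<in> GL n \<Longrightarrow> A * B \<in> GL n"
  unfolding GL_iff_det_dvd_one by (auto simp: det_mult)

lemma U_lw_carrier: "L \<in> U_lw n \<Longrightarrow> L \<in> carrier_mat n n"
  unfolding U_lw_def by simp

lemma U_up_carrier: "U \<in> U_up n \<Longrightarrow> U \<in> carrier_mat n n"
  unfolding U_up_def by simp

lemma U_up_iff_transpose: "U \<in> U_up n \<longleftrightarrow> transpose_mat U \<in> U_lw n"
proof (cases "U \<in> carrier_mat n n")
  case True
  then have "transpose_mat U $$ (i, j) = U $$ (j, i)" if "i < n" "j < n" for i j
    using that by simp
  then show ?thesis using True unfolding U_up_def U_lw_def by auto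
qed (simp add: U_up_def U_lw_def)

lemma det_U_lw: "L \<in> U_lw n \<Longrightarrow> det L = 1"
  unfolding U_lw_def
  by (subst det_lower_triangular[of n]) (auto simp: prod_list_diag_prod)

lemma det_U_up: "U \<in> U_up n \<Longrightarrow> det U = 1"
  using det_U_lw[of "transpose_mat U"] det_transpose[OF U_up_carrier[of U n]]
  unfolding U_up_iff_transpose by simp

lemma U_lw_GL: "L \<in> U_lw n \<Longrightarrow> L \<in> GL n"
  unfolding GL_iff_det_dvd_one by (simp add: det_U_lw U_lw_carrier)

lemma U_up_GL: "U \<in> U_up n \<Longrightarrow> U \<in> GL n"
  unfolding GL_iff_det_dvd_one by (simp add: det_U_up U_up_carrier)

lemma U_lw_mult_index:
  assumes L: "L \<in> U_lw n" and M: "M \<in> U_lw n" and ij: "i \<le> j" "j < n"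
  shows "(L * M) $$ (i, j) = M $$ (i, j)"
proof -
  have summand: "L $$ (i, l) * M $$ (l, j) = (if l = i then M $$ (i, j) else 0)" if "l < n" for l
    using assms that unfolding U_lw_def by (cases l i rule: linorder_cases) auto
  have "(L * M) $$ (i, j) = (\<Sum>l<n. L $$ (i, l) * M $$ (l, j))"
    using ij by (intro index_mult_mat_sum[OF U_lw_carrier[OF L] U_lw_carrier[OF M]]) auto
  also have "\<dots> = M $$ (i, j)"
    using ij by (simp add: summand)
  finally show ?thesis .
qed

lemma U_lw_mult: "L \<in> U_lw n \<Longrightarrow> M \<in> U_lw n \<Longrightarrow> L * M \<in> U_lw n"
  using U_lw_mult_index[of L n M] U_lw_carrier[of L n] U_lw_carrier[of M n]
  unfolding U_lw_def by auto

lemma U_up_mult: "U \<in> U_up n \<Longrightarrow> V \<in> U_up n \<Longrightarrow> U * V \<in> U_up n"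
  using U_lw_mult[of "transpose_mat V" n "transpose_mat U"] transpose_mult[of U n n V n]
  unfolding U_up_iff_transpose by (simp add: U_lw_carrier U_up_iff_transpose[symmetric] U_up_carrier)

lemma U_lw_if_right_inverse:
  assumes L: "L \<in> U_lw n" and X: "X \<in> carrier_mat n n" and LX: "L * X = 1\<^sub>m n"
  shows "X \<in> U_lw n"
proof -
  have "X $$ (i, j) = (if i = j then 1 else 0)" if "i \<le> j" "j < n" for i j
    using that
  proof (induction i rule: less_induct)
    case (less i)
    have summand: "L $$ (i, l) * X $$ (l, j) = (if l = i then X $$ (i, j) else 0)" if "l < n" for l
      using L less that unfolding U_lw_def by (cases l i rule: linorder_cases) auto
    have "(if i = j then 1 else 0) = (L * X) $$ (i, j)"
      using LX less.prems by simp
    also have "\<dots> = (\<Sum>l<n. L $$ (i, l) * X $$ (l, j))"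
      using less.prems by (intro index_mult_mat_sum[OF U_lw_carrier[OF L] X]) auto
    also have "\<dots> = X $$ (i, j)"
      using less.prems by (simp add: summand)
    finally show ?case by simp
  qed
  then show ?thesis
    using X unfolding U_lw_def by (auto simp: less_imp_le)
qed

lemma U_lw_inverse:
  assumes "L \<in> U_lw n"
  obtains L' where "L' \<in> U_lw n" "L * L' = 1\<^sub>m n"
  using GL_inverse[OF U_lw_GL[OF assms]] U_lw_if_right_inverse[OF assms] by metis

lemma U_up_inverse:
  assumes U: "U \<in> U_up n"
  obtains U' where "U' \<in> U_up n" "U * U' = 1\<^sub>m n"
proof -
  obtain U' where U': "U' \<in> carrier_mat n n" "U * U' = 1\<^sub>m n" "U' * U = 1\<^sub>m n"
    using GL_inverse[OF U_up_GL[OF U]] by blast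
  have "transpose_mat U * transpose_mat U' = 1\<^sub>m n"
    using transpose_mult[OF U'(1) U_up_carrier[OF U]] U'(3) by simp
  then have "U' \<in> U_up n"
    using U U' unfolding U_up_iff_transpose by (auto intro: U_lw_if_right_inverse)
  then show ?thesis using that U'(2) by blast
qed

lemma mem_set_prod3_if_mult_mem:
  assumes A: "A \<in> carrier_mat n n" and U: "U \<in> U_up n" and L: "L \<in> U_lw n"
    and AUL: "A * U * L \<in> G"
  shows "A \<in> set_prod3 G (U_lw n) (U_up n)"
proof -
  obtain U' where U': "U' \<in> U_up n" "U * U' = 1\<^sub>m n" using U_up_inverse[OF U] .
  obtain L' where L': "L' \<in> U_lw n" "L * L' = 1\<^sub>m n" using U_lw_inverse[OF L] .
  note carriers = A U_up_carrier[OF U] U_up_carrier[OF U'(1)] U_lw_carrier[OF L]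
    U_lw_carrier[OF L'(1)]
  have "A * U * L * L' * U' = A * (U * (L * L') * U')"
    using carriers by (simp add: assoc_mult_mat[of _ n n _ n _ n])
  also have "\<dots> = A"
    using carriers L'(2) U'(2) by simp
  finally have "A = (A * U * L) * L' * U'" by simp
  then show ?thesis
    using AUL L'(1) U'(1) unfolding set_prod3_def by blast
qed

section \<open>d-matrices and the group G_Phi\<close>

definition dvd_below_diag :: "'a::comm_ring_1 \<Rightarrow> nat \<Rightarrow> 'a mat \<Rightarrow> bool" where
  "dvd_below_diag c n H \<longleftrightarrow> (\<forall>i<n. \<forall>j<i. c dvd H $$ (i, j))"

lemma d_matrix_carrier: "d_matrix n \<Phi> \<Longrightarrow> \<Phi> \<in> carrier_mat n n"
  unfolding d_matrix_def by simp

lemma d_matrix_diag_dvd: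
  assumes "d_matrix n \<Phi>" "i \<le> j" "j < n"
  shows "\<Phi> $$ (i, i) dvd \<Phi> $$ (j, j)"
  using assms(2,3)
proof (induction j rule: dec_induct)
  case (step k)
  then show ?case
    using assms(1) unfolding d_matrix_def by (auto intro: dvd_trans)
qed simp

lemma det_d_matrix: "d_matrix n \<Phi> \<Longrightarrow> det \<Phi> = (\<Prod>i<n. \<Phi> $$ (i, i))"
  unfolding d_matrix_def
  by (subst det_upper_triangular[of _ n]) (auto simp: prod_list_diag_prod lessThan_atLeast0)

lemma d_matrix_last_nonzero:
  assumes "d_matrix n (\<Phi>::'a::idom mat)" "det \<Phi> \<noteq> 0" "0 < n"
  shows "\<Phi> $$ (n - 1, n - 1) \<noteq> 0"
  using assms by (simp add: det_d_matrix)

lemma index_mult_d_matrix_right: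
  assumes "d_matrix n \<Phi>" "H \<in> carrier_mat n n" "i < n" "j < n"
  shows "(H * \<Phi>) $$ (i, j) = H $$ (i, j) * \<Phi> $$ (j, j)"
proof -
  have "(H * \<Phi>) $$ (i, j) = (\<Sum>l<n. H $$ (i, l) * \<Phi> $$ (l, j))"
    using assms by (intro index_mult_mat_sum[OF _ d_matrix_carrier])
  also have "\<dots> = (\<Sum>l<n. if l = j then H $$ (i, j) * \<Phi> $$ (j, j) else 0)"
    using assms(1,4) unfolding d_matrix_def by (intro sum.cong) auto
  finally show ?thesis using assms(4) by simp
qed

lemma index_mult_d_matrix_left:
  assumes "d_matrix n \<Phi>" "K \<in> carrier_mat n n" "i < n" "j < n"
  shows "(\<Phi> * K) $$ (i, j) = \<Phi> $$ (i, i) * K $$ (i, j)"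
proof -
  have "(\<Phi> * K) $$ (i, j) = (\<Sum>l<n. \<Phi> $$ (i, l) * K $$ (l, j))"
    using assms by (intro index_mult_mat_sum[OF d_matrix_carrier])
  also have "\<dots> = (\<Sum>l<n. if l = i then \<Phi> $$ (i, i) * K $$ (i, j) else 0)"
    using assms(1,3) unfolding d_matrix_def by (intro sum.cong) auto
  finally show ?thesis using assms(3) by simp
qed

lemma G_Phi_if_dvd_below_diag:
  fixes \<Phi> :: "'a::idom mat"
  assumes dm: "d_matrix n \<Phi>" and "det \<Phi> \<noteq> 0" and H: "H \<in> GL n"
    and below: "dvd_below_diag (\<Phi> $$ (n - 1, n - 1)) n H"
  shows "H \<in> G_Phi n \<Phi>"
proof -
  have "\<Phi> $$ (i, i) dvd H $$ (i, j) * \<Phi> $$ (j, j)" if "i < n" "j < n" for i j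
  proof (cases "i \<le> j")
    case True
    then show ?thesis using d_matrix_diag_dvd[OF dm] that by simp
  next
    case False
    then have "\<Phi> $$ (i, i) dvd \<Phi> $$ (n - 1, n - 1)" "\<Phi> $$ (n - 1, n - 1) dvd H $$ (i, j)"
      using d_matrix_diag_dvd[OF dm, of i "n - 1"] below that unfolding dvd_below_diag_def
      by auto
    then show ?thesis by (auto intro: dvd_trans)
  qed
  then have quotient: "\<exists>k. H $$ (i, j) * \<Phi> $$ (j, j) = \<Phi> $$ (i, i) * k" if "i < n" "j < n" for i j
    using that unfolding dvd_def by blast
  define K where "K = mat n n (\<lambda>(i, j). SOME k. H $$ (i, j) * \<Phi> $$ (j, j) = \<Phi> $$ (i, i) * k)"
  have K: "K \<in> carrier_mat n n" unfolding K_def by simp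
  have "(H * \<Phi>) $$ (i, j) = (\<Phi> * K) $$ (i, j)" if "i < n" "j < n" for i j
  proof -
    have "H $$ (i, j) * \<Phi> $$ (j, j) = \<Phi> $$ (i, i) * K $$ (i, j)"
      unfolding K_def using that someI_ex[OF quotient[OF that]] by simp
    then show ?thesis
      using index_mult_d_matrix_right[OF dm GL_carrier[OF H] that]
        index_mult_d_matrix_left[OF dm K that] by simp
  qed
  then have HK: "H * \<Phi> = \<Phi> * K"
    using GL_carrier[OF H] K d_matrix_carrier[OF dm] by (intro eq_matI) auto
  have "det H * det \<Phi> = det \<Phi> * det K"
    using arg_cong[OF HK, of det] det_mult GL_carrier[OF H] K d_matrix_carrier[OF dm] by metis
  then have "det K = det H" using \<open>det \<Phi> \<noteq> 0\<close> by (simp add: mult.commute)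
  then have "K \<in> GL n" using H K unfolding GL_iff_det_dvd_one by simp
  then show ?thesis unfolding G_Phi_def using H HK by blast
qed

lemma G_Phi_dvd:
  assumes "d_matrix n \<Phi>" "H \<in> G_Phi n \<Phi>" "i < n" "j < n"
  shows "\<Phi> $$ (i, i) dvd H $$ (i, j) * \<Phi> $$ (j, j)"
proof -
  obtain K where H: "H \<in> GL n" and K: "K \<in> GL n" and HK: "H * \<Phi> = \<Phi> * K"
    using assms(2) unfolding G_Phi_def by blast
  have "H $$ (i, j) * \<Phi> $$ (j, j) = \<Phi> $$ (i, i) * K $$ (i, j)"
    using arg_cong[OF HK, of "\<lambda>X. X $$ (i, j)"]
    by (simp add: index_mult_d_matrix_right[OF assms(1) GL_carrier[OF H] assms(3,4)]
        index_mult_d_matrix_left[OF assms(1) GL_carrier[OF K] assms(3,4)])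
  then show ?thesis by simp
qed

section \<open>Bordered matrices\<close>

definition embed_mat :: "nat \<Rightarrow> 'a::zero_neq_one mat \<Rightarrow> 'a mat" where
  "embed_mat n X = mat (Suc n) (Suc n)
     (\<lambda>(i, j). if i < n \<and> j < n then X $$ (i, j) else if i = j then 1 else 0)"

definition last_row_mat :: "nat \<Rightarrow> (nat \<Rightarrow> 'a::zero_neq_one) \<Rightarrow> 'a mat" where
  "last_row_mat n t = mat (Suc n) (Suc n)
     (\<lambda>(i, j). if i = j then 1 else if i = n \<and> j < n then t j else 0)"

definition last_col_mat :: "nat \<Rightarrow> (nat \<Rightarrow> 'a::zero_neq_one) \<Rightarrow> 'a mat" where
  "last_col_mat n w = mat (Suc n) (Suc n)
     (\<lambda>(i, j). if i = j then 1 else if j = n \<and> i < n then w i else 0)"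

lemma embed_mat_carrier [simp]: "embed_mat n X \<in> carrier_mat (Suc n) (Suc n)"
  and last_row_mat_carrier [simp]: "last_row_mat n t \<in> carrier_mat (Suc n) (Suc n)"
  and last_col_mat_carrier [simp]: "last_col_mat n w \<in> carrier_mat (Suc n) (Suc n)"
  unfolding embed_mat_def last_row_mat_def last_col_mat_def by simp_all

lemma dim_embed_mat [simp]: "dim_row (embed_mat n X) = Suc n" "dim_col (embed_mat n X) = Suc n"
  and dim_last_row_mat [simp]: "dim_row (last_row_mat n t) = Suc n" "dim_col (last_row_mat n t) = Suc n"
  unfolding embed_mat_def last_row_mat_def by simp_all

lemma index_embed_mat [simp]:
  "i < Suc n \<Longrightarrow> j < Suc n \<Longrightarrow>
    embed_mat n X $$ (i, j) = (if i < n \<and> j < n then X $$ (i, j) else if i = j then 1 else 0)"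
  unfolding embed_mat_def by simp

lemma index_last_row_mat [simp]:
  "i < Suc n \<Longrightarrow> j < Suc n \<Longrightarrow>
    last_row_mat n t $$ (i, j) = (if i = j then 1 else if i = n \<and> j < n then t j else 0)"
  unfolding last_row_mat_def by simp

lemma index_last_col_mat [simp]:
  "i < Suc n \<Longrightarrow> j < Suc n \<Longrightarrow>
    last_col_mat n w $$ (i, j) = (if i = j then 1 else if j = n \<and> i < n then w i else 0)"
  unfolding last_col_mat_def by simp

lemma embed_mat_U_lw: "X \<in> U_lw n \<Longrightarrow> embed_mat n X \<in> U_lw (Suc n)"
  unfolding U_lw_def by auto

lemma embed_mat_U_up: "X \<in> U_up n \<Longrightarrow> embed_mat n X \<in> U_up (Suc n)"
  unfolding U_up_def by auto

lemma last_row_mat_U_lw: "last_row_mat n t \<in> U_lw (Suc n)"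
  unfolding U_lw_def by auto

lemma last_col_mat_U_up: "last_col_mat n w \<in> U_up (Suc n)"
  unfolding U_up_def by auto

lemma index_mult_embed_mat:
  fixes M :: "'a::comm_ring_1 mat"
  assumes "M \<in> carrier_mat (Suc n) (Suc n)" "i < Suc n" "j < Suc n"
  shows "(M * embed_mat n Y) $$ (i, j) =
    (if j < n then (\<Sum>l<n. M $$ (i, l) * Y $$ (l, j)) else M $$ (i, n))"
proof -
  have "(\<Sum>l<n. M $$ (i, l) * embed_mat n Y $$ (l, j)) =
      (if j < n then (\<Sum>l<n. M $$ (i, l) * Y $$ (l, j)) else 0)"
    using assms(3) by (auto intro: sum.neutral)
  then show ?thesis
    unfolding index_mult_mat_sum[OF assms(1) embed_mat_carrier assms(2,3)] using assms by simp
qed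

lemma index_mult_last_row_mat:
  fixes M :: "'a::comm_ring_1 mat"
  assumes "M \<in> carrier_mat (Suc n) (Suc n)" "i < Suc n" "j < Suc n"
  shows "(M * last_row_mat n t) $$ (i, j) =
    (if j < n then M $$ (i, j) + M $$ (i, n) * t j else M $$ (i, n))"
proof -
  have "(\<Sum>l<n. M $$ (i, l) * last_row_mat n t $$ (l, j)) = (if j < n then M $$ (i, j) else 0)"
    using assms(3) by (auto simp: if_distrib cong: if_cong)
  then show ?thesis
    unfolding index_mult_mat_sum[OF assms(1) last_row_mat_carrier assms(2,3)] using assms by simp
qed

lemma index_mult_last_col_mat_last:
  fixes M :: "'a::comm_ring_1 mat"
  assumes "M \<in> carrier_mat (Suc n) (Suc n)" "i < Suc n"
  shows "(M * last_col_mat n w) $$ (i, n) = M $$ (i, n) + (\<Sum>l<n. M $$ (i, l) * w l)"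
proof -
  have "(\<Sum>l<n. M $$ (i, l) * last_col_mat n w $$ (l, n)) = (\<Sum>l<n. M $$ (i, l) * w l)"
    by (intro sum.cong) auto
  then show ?thesis
    using assms by (simp add: index_mult_mat_sum[OF assms(1) last_col_mat_carrier])
qed

lemma mat_delete_mult_embed_mat:
  fixes M :: "'a::comm_ring_1 mat"
  assumes M: "M \<in> carrier_mat (Suc n) (Suc n)" and Y: "Y \<in> carrier_mat n n"
  shows "mat_delete (M * embed_mat n Y) n n = mat_delete M n n * Y"
proof (rule eq_matI)
  fix i j assume "i < dim_row (mat_delete M n n * Y)" "j < dim_col (mat_delete M n n * Y)"
  then have ij: "i < n" "j < n" using M Y by auto
  have D: "mat_delete M n n \<in> carrier_mat n n"
    using mat_delete_carrier[of M "Suc n" "Suc n" n n] M by simp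
  have "mat_delete (M * embed_mat n Y) n n $$ (i, j) = (M * embed_mat n Y) $$ (i, j)"
    using M ij by (simp add: mat_delete_def)
  also have "\<dots> = (\<Sum>l<n. M $$ (i, l) * Y $$ (l, j))"
    using index_mult_embed_mat[OF M, of i j Y] ij by simp
  also have "\<dots> = (mat_delete M n n * Y) $$ (i, j)"
    unfolding index_mult_mat_sum[OF D Y ij] using M ij by (simp add: mat_delete_def)
  finally show "mat_delete (M * embed_mat n Y) n n $$ (i, j) = (mat_delete M n n * Y) $$ (i, j)" .
qed (use M Y in auto)

lemma last_row_mat_mult_embed_mat:
  fixes Y :: "'a::comm_ring_1 mat"
  assumes Y: "Y \<in> carrier_mat n n"
  shows "last_row_mat n t * embed_mat n Y = embed_mat n Y * last_row_mat n (\<lambda>j. \<Sum>l<n. t l * Y $$ (l, j))"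
    (is "_ = _ * last_row_mat n ?s")
proof (rule eq_matI)
  fix i j assume "i < dim_row (embed_mat n Y * last_row_mat n ?s)"
    "j < dim_col (embed_mat n Y * last_row_mat n ?s)"
  then have ij: "i < Suc n" "j < Suc n" by auto
  have "(\<Sum>l<n. last_row_mat n t $$ (i, l) * Y $$ (l, j)) = (if i < n then Y $$ (i, j) else ?s j)"
  proof (cases "i < n")
    case True
    then have "(\<Sum>l<n. last_row_mat n t $$ (i, l) * Y $$ (l, j)) =
        (\<Sum>l<n. if l = i then Y $$ (i, j) else 0)"
      by (intro sum.cong) auto
    then show ?thesis using True by simp
  next
    case False
    then have "i = n" using ij by simp
    then show ?thesis by (auto intro: sum.cong)
  qed
  then show "(last_row_mat n t * embed_mat n Y) $$ (i, j) = (embed_mat n Y * last_row_mat n ?s) $$ (i, j)"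
    unfolding index_mult_embed_mat[OF last_row_mat_carrier ij]
      index_mult_last_row_mat[OF embed_mat_carrier ij]
    using ij by auto
qed auto

lemma mult_last_row_mat_embed_mat_swap:
  fixes A :: "'a::comm_ring_1 mat"
  assumes A: "A \<in> carrier_mat (Suc n) (Suc n)" and Y: "Y \<in> carrier_mat n n"
    and Z: "Z \<in> carrier_mat (Suc n) (Suc n)"
  shows "A * last_row_mat n t * embed_mat n Y * Z =
    A * embed_mat n Y * (last_row_mat n (\<lambda>j. \<Sum>l<n. t l * Y $$ (l, j)) * Z)"
proof -
  let ?E = "embed_mat n Y" and ?T = "last_row_mat n (\<lambda>j. \<Sum>l<n. t l * Y $$ (l, j))"
  have AE: "A * ?E \<in> carrier_mat (Suc n) (Suc n)" using A by simp
  have "A * last_row_mat n t * ?E = A * (last_row_mat n t * ?E)"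
    by (rule assoc_mult_mat[OF A last_row_mat_carrier embed_mat_carrier])
  also have "\<dots> = A * ?E * ?T"
    unfolding last_row_mat_mult_embed_mat[OF Y]
    by (rule assoc_mult_mat[OF A embed_mat_carrier last_row_mat_carrier, symmetric])
  finally show ?thesis
    using assoc_mult_mat[OF AE last_row_mat_carrier Z] by simp
qed

section \<open>From stable range 1.5 to the decomposition\<close>

lemma exists_U_up_comaximal_last_entry:
  fixes A :: "'a::idom mat"
  assumes bez: "bezout_domain TYPE('a)" and sr: "stable_range_15 TYPE('a)" and "c \<noteq> 0"
    and A: "A \<in> carrier_mat (Suc n) (Suc n)" and "comaximal (det A) c"
  obtains U where "U \<in> U_up (Suc n)" "comaximal ((A * U) $$ (n, n)) c"
proof -
  obtain d w g where d: "d = (\<Sum>j<n. w j * A $$ (n, j))" and g: "\<forall>j<n. A $$ (n, j) = g j * d"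
    using bezout_domain_gcd_family[OF bez, where m=n and x="\<lambda>j. A $$ (n, j)"] by blast
  define S where "S = (\<Sum>j<n. g j * cofactor A n j)"
  have "(\<Sum>j<n. A $$ (n, j) * cofactor A n j) = d * S"
    unfolding S_def sum_distrib_left using g by (intro sum.cong) (simp_all add: mult_ac)
  then have det: "det A = d * S + A $$ (n, n) * det (mat_delete A n n)"
    using det_expand_last_row[OF A] by simp
  obtain \<alpha> \<beta> where "\<alpha> * det A + \<beta> * c = 1"
    using \<open>comaximal (det A) c\<close> unfolding comaximal_def by blast
  then have "(\<alpha> * det (mat_delete A n n)) * A $$ (n, n) + (\<alpha> * S) * d + \<beta> * c = 1"
    unfolding det by (simp add: algebra_simps)
  then obtain r where r: "comaximal (A $$ (n, n) + d * r) c"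
    using stable_range_15_comaximal[OF sr \<open>c \<noteq> 0\<close>] by blast
  have "(A * last_col_mat n (\<lambda>i. w i * r)) $$ (n, n) = A $$ (n, n) + d * r"
    unfolding index_mult_last_col_mat_last[OF A lessI] d sum_distrib_right
    by (simp add: mult_ac)
  then show ?thesis using that last_col_mat_U_up r by metis
qed

text \<open>If \<open>v a\<^sub>n\<^sub>n \<equiv> 1 (mod c)\<close>, subtracting \<open>v a\<^sub>n\<^sub>j\<close> times the last column from column \<open>j\<close>
  makes the last row vanish modulo \<open>c\<close>.\<close>

lemma exists_last_row_mat_clearing:
  fixes M :: "'a::comm_ring_1 mat"
  assumes M: "M \<in> carrier_mat (Suc n) (Suc n)" and "comaximal (M $$ (n, n)) c"
  obtains t where "\<forall>j<n. c dvd (M * last_row_mat n t) $$ (n, j)"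
proof -
  obtain v e where ve: "v * M $$ (n, n) + e * c = 1"
    using assms(2) unfolding comaximal_def by blast
  have "c dvd (M * last_row_mat n (\<lambda>j. - (M $$ (n, j) * v))) $$ (n, j)" if "j < n" for j
  proof -
    have "(M * last_row_mat n (\<lambda>j. - (M $$ (n, j) * v))) $$ (n, j) =
        M $$ (n, j) * (1 - v * M $$ (n, n))"
      using index_mult_last_row_mat[OF M lessI, of j] that by (simp add: algebra_simps)
    also have "\<dots> = c * (M $$ (n, j) * e)"
      using ve by (simp add: algebra_simps flip: ve)
    finally show ?thesis by simp
  qed
  then show ?thesis using that by blast
qed

lemma comaximal_det_mat_delete_last:
  fixes M :: "'a::comm_ring_1 mat"
  assumes M: "M \<in> carrier_mat (Suc n) (Suc n)" and row: "\<forall>j<n. c dvd M $$ (n, j)"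
    and "comaximal (det M) c"
  shows "comaximal (det (mat_delete M n n)) c"
proof -
  have "c dvd (\<Sum>j<n. M $$ (n, j) * cofactor M n j)"
    using row by (auto intro: dvd_sum dvd_mult2)
  then obtain k where k: "(\<Sum>j<n. M $$ (n, j) * cofactor M n j) = c * k"
    by (elim dvdE)
  obtain \<alpha> \<beta> where "\<alpha> * det M + \<beta> * c = 1"
    using \<open>comaximal (det M) c\<close> unfolding comaximal_def by blast
  then have "(\<alpha> * M $$ (n, n)) * det (mat_delete M n n) + (\<alpha> * k + \<beta>) * c = 1"
    unfolding det_expand_last_row[OF M] k by (simp add: algebra_simps)
  then show ?thesis unfolding comaximal_def by blast
qed

lemma dvd_below_diag_mult_embed_mat:
  fixes M :: "'a::comm_ring_1 mat"
  assumes M: "M \<in> carrier_mat (Suc n) (Suc n)" and row: "\<forall>j<n. c dvd M $$ (n, j)"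
    and U: "U \<in> carrier_mat n n" and L: "L \<in> carrier_mat n n"
    and minor: "dvd_below_diag c n (mat_delete M n n * U * L)"
  shows "dvd_below_diag c (Suc n) (M * embed_mat n U * embed_mat n L)"
proof -
  let ?F = "M * embed_mat n U * embed_mat n L"
  have MU: "M * embed_mat n U \<in> carrier_mat (Suc n) (Suc n)" using M by simp
  have "mat_delete ?F n n = mat_delete M n n * U * L"
    using mat_delete_mult_embed_mat[OF MU L] mat_delete_mult_embed_mat[OF M U] by simp
  moreover have "?F $$ (i, j) = mat_delete ?F n n $$ (i, j)" if "i < n" "j < n" for i j
    using that M by (simp add: mat_delete_def)
  ultimately have upper: "c dvd ?F $$ (i, j)" if "i < n" "j < i" for i j
    using minor that unfolding dvd_below_diag_def by simp
  have last: "c dvd ?F $$ (n, j)" if "j < n" for j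
  proof -
    have "?F $$ (n, j) = (\<Sum>l<n. (\<Sum>k<n. M $$ (n, k) * U $$ (k, l)) * L $$ (l, j))"
      using index_mult_embed_mat[OF MU lessI, of j L] index_mult_embed_mat[OF M lessI, of _ U] that
      by simp
    then show ?thesis using row by (auto intro!: dvd_sum dvd_mult2)
  qed
  show ?thesis
    unfolding dvd_below_diag_def using upper last by (auto simp: less_Suc_eq)
qed

lemma exists_U_up_U_lw_dvd_below_diag:
  fixes A :: "'a::idom mat"
  assumes bez: "bezout_domain TYPE('a)" and sr: "stable_range_15 TYPE('a)" and c: "c \<noteq> 0"
  shows "A \<in> carrier_mat n n \<Longrightarrow> comaximal (det A) c \<Longrightarrow>
    \<exists>U\<in>U_up n. \<exists>L\<in>U_lw n. dvd_below_diag c n (A * U * L)"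
proof (induction n arbitrary: A)
  case 0
  have "1\<^sub>m 0 \<in> U_up 0" "1\<^sub>m 0 \<in> U_lw 0" unfolding U_up_def U_lw_def by auto
  then show ?case unfolding dvd_below_diag_def by blast
next
  case (Suc n)
  note A = Suc.prems(1)
  obtain U1 where U1: "U1 \<in> U_up (Suc n)" "comaximal ((A * U1) $$ (n, n)) c"
    using exists_U_up_comaximal_last_entry[OF bez sr c Suc.prems] .
  have AU1: "A * U1 \<in> carrier_mat (Suc n) (Suc n)"
    using A U_up_carrier[OF U1(1)] by simp
  obtain t where t: "\<forall>j<n. c dvd (A * U1 * last_row_mat n t) $$ (n, j)"
    using exists_last_row_mat_clearing[OF AU1 U1(2)] .
  define M where "M = A * U1 * last_row_mat n t"
  have M: "M \<in> carrier_mat (Suc n) (Suc n)" unfolding M_def using AU1 by simp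
  have "det M = det A"
    unfolding M_def det_mult[OF AU1 last_row_mat_carrier] det_mult[OF A U_up_carrier[OF U1(1)]]
    using det_U_up[OF U1(1)] det_U_lw[OF last_row_mat_U_lw[of n t]] by simp
  then have "comaximal (det (mat_delete M n n)) c"
    using comaximal_det_mat_delete_last[OF M] t Suc.prems(2) unfolding M_def by simp
  moreover have M': "mat_delete M n n \<in> carrier_mat n n"
    using mat_delete_carrier[of M "Suc n" "Suc n" n n] M by simp
  ultimately obtain U' L' where U': "U' \<in> U_up n" and L': "L' \<in> U_lw n"
    and minor: "dvd_below_diag c n (mat_delete M n n * U' * L')"
    using Suc.IH by blast
  define s where "s j = (\<Sum>l<n. t l * U' $$ (l, j))" for j
  have "M * embed_mat n U' * embed_mat n L' =
      A * (U1 * embed_mat n U') * (last_row_mat n s * embed_mat n L')"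
    unfolding M_def s_def mult_last_row_mat_embed_mat_swap[OF AU1 U_up_carrier[OF U'] embed_mat_carrier]
    by (simp only: assoc_mult_mat[OF A U_up_carrier[OF U1(1)] embed_mat_carrier])
  then have "dvd_below_diag c (Suc n)
      (A * (U1 * embed_mat n U') * (last_row_mat n s * embed_mat n L'))"
    using dvd_below_diag_mult_embed_mat[OF M _ U_up_carrier[OF U'] U_lw_carrier[OF L'] minor] t
    unfolding M_def by simp
  moreover have "U1 * embed_mat n U' \<in> U_up (Suc n)"
    using U_up_mult[OF U1(1) embed_mat_U_up[OF U']] .
  moreover have "last_row_mat n s * embed_mat n L' \<in> U_lw (Suc n)"
    using U_lw_mult[OF last_row_mat_U_lw embed_mat_U_lw[OF L']] .
  ultimately show ?case by blast
qed

lemma GL_eq_set_prod3_if_stable_range_15: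
  fixes \<Phi> :: "'a::idom mat"
  assumes bez: "bezout_domain TYPE('a)" and sr: "stable_range_15 TYPE('a)"
    and dm: "d_matrix n \<Phi>" and det: "det \<Phi> \<noteq> 0" and n: "0 < n"
  shows "GL n = set_prod3 (G_Phi n \<Phi>) (U_lw n) (U_up n)"
proof (intro equalityI subsetI)
  fix X assume "X \<in> set_prod3 (G_Phi n \<Phi>) (U_lw n) (U_up n)"
  then obtain H L U where "X = H * L * U" "H \<in> GL n" "L \<in> U_lw n" "U \<in> U_up n"
    unfolding set_prod3_def G_Phi_def by blast
  then show "X \<in> GL n" by (simp add: GL_mult U_lw_GL U_up_GL)
next
  fix A :: "'a mat" assume A: "A \<in> GL n"
  have "comaximal (det A) (\<Phi> $$ (n - 1, n - 1))"
    using A unfolding GL_iff_det_dvd_one by (simp add: comaximal_if_dvd_one)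
  then obtain U L where U: "U \<in> U_up n" and L: "L \<in> U_lw n"
    and below: "dvd_below_diag (\<Phi> $$ (n - 1, n - 1)) n (A * U * L)"
    using exists_U_up_U_lw_dvd_below_diag[OF bez sr d_matrix_last_nonzero[OF dm det n] GL_carrier[OF A]]
    by blast
  have "A * U * L \<in> G_Phi n \<Phi>"
    using G_Phi_if_dvd_below_diag[OF dm det _ below] A U L by (simp add: GL_mult U_lw_GL U_up_GL)
  then show "A \<in> set_prod3 (G_Phi n \<Phi>) (U_lw n) (U_up n)"
    by (rule mem_set_prod3_if_mult_mem[OF GL_carrier[OF A] U L])
qed

section \<open>From the 2 x 2 decomposition to stable range 1.5\<close>

definition diag_one :: "'a::comm_ring_1 \<Rightarrow> 'a mat" where
  "diag_one c = mat 2 2 (\<lambda>(i, j). if i = j then (if i = 0 then 1 else c) else 0)"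

lemma d_matrix_diag_one: "d_matrix 2 (diag_one c)"
  unfolding d_matrix_def diag_one_def by auto

lemma det_diag_one: "det (diag_one c) = c"
  unfolding det_d_matrix[OF d_matrix_diag_one] by (simp add: diag_one_def numeral_2_eq_2)

definition completion_mat :: "'a::comm_ring_1 \<Rightarrow> 'a \<Rightarrow> 'a \<Rightarrow> 'a \<Rightarrow> 'a mat" where
  "completion_mat \<alpha> \<beta> a b =
    mat 2 2 (\<lambda>(i, j). if i = 0 then (if j = 0 then \<alpha> else - \<beta>) else (if j = 0 then b else a))"

lemma completion_mat_GL:
  assumes "\<alpha> * a + \<beta> * b = 1"
  shows "completion_mat \<alpha> \<beta> a b \<in> GL 2"
proof -
  have "det (completion_mat \<alpha> \<beta> a b) = 1"
    using assms by (simp add: det_2x2 completion_mat_def algebra_simps)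
  then show ?thesis
    unfolding GL_iff_det_dvd_one completion_mat_def by simp
qed

lemma comaximal_if_completion_mat_mem_set_prod3:
  fixes c :: "'a::comm_ring_1"
  assumes "\<alpha> * a + \<beta> * b = 1"
    and "completion_mat \<alpha> \<beta> a b \<in> set_prod3 (G_Phi 2 (diag_one c)) (U_lw 2) (U_up 2)"
      (is "?A \<in> _")
  obtains u where "comaximal (a - b * u) c"
proof -
  obtain H L U where A: "?A = H * L * U" and H: "H \<in> G_Phi 2 (diag_one c)"
    and L: "L \<in> U_lw 2" and U: "U \<in> U_up 2"
    using assms(2) unfolding set_prod3_def by blast
  have "diag_one c $$ (1, 1) dvd H $$ (1, 0) * diag_one c $$ (0, 0)"
    by (rule G_Phi_dvd[OF d_matrix_diag_one H]) auto
  then obtain m where m: "H $$ (1, 0) = c * m"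
    by (auto simp: diag_one_def elim: dvdE)
  have Hc: "H \<in> carrier_mat 2 2" using H unfolding G_Phi_def GL_def by simp
  have HL: "H * L \<in> carrier_mat 2 2" using Hc U_lw_carrier[OF L] by simp
  have L_entries: "L $$ (0, 0) = 1" "L $$ (0, 1) = 0" "L $$ (1, 1) = 1"
    using L unfolding U_lw_def by auto
  have U_entries: "U $$ (0, 0) = 1" "U $$ (1, 0) = 0" "U $$ (1, 1) = 1"
    using U unfolding U_up_def by auto
  define l h u where "l = L $$ (1, 0)" and "h = H $$ (1, 1)" and "u = U $$ (0, 1)"
  have "(H * L) $$ (1, 0) = c * m + h * l" "(H * L) $$ (1, 1) = h"
    using index_mult_2x2[OF Hc U_lw_carrier[OF L]] L_entries m unfolding l_def h_def by simp_all
  then have "?A $$ (1, 0) = c * m + h * l" "?A $$ (1, 1) = (c * m + h * l) * u + h"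
    using index_mult_2x2[OF HL U_up_carrier[OF U]] U_entries unfolding A u_def by simp_all
  then have b: "b = c * m + h * l" and a: "a = b * u + h"
    by (simp_all add: completion_mat_def)
  have "(\<alpha> + l * (\<alpha> * u + \<beta>)) * h + (m * (\<alpha> * u + \<beta>)) * c = 1"
    using assms(1) unfolding a b by (simp add: algebra_simps)
  then have "comaximal (a - b * u) c"
    unfolding comaximal_def a by auto
  then show ?thesis by (rule that)
qed

lemma stable_range_15_if_GL_2_eq_set_prod3:
  assumes bez: "bezout_domain TYPE('a::idom)"
    and GL2: "\<forall>\<Phi>::'a mat. d_matrix 2 \<Phi> \<and> det \<Phi> \<noteq> 0 \<longrightarrow>
      GL 2 = set_prod3 (G_Phi 2 \<Phi>) (U_lw 2) (U_up 2)"
  shows "stable_range_15 TYPE('a)"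
  unfolding stable_range_15_def
proof (intro allI impI)
  fix a b c :: 'a
  assume c: "c \<noteq> 0" and "gen_ideal {a, b, c} = UNIV"
  then obtain x y z where xyz: "x * a + y * b + z * c = 1"
    unfolding gen_ideal_triple_eq_UNIV_iff by blast
  obtain d \<alpha> \<beta> a' b' where d: "d = \<alpha> * a + \<beta> * b" and a: "a = a' * d" and b: "b = b' * d"
    by (rule bezout_domain_gcd[OF bez])
  have "\<exists>r. comaximal (a + b * r) c"
  proof (cases "d = 0")
    case True
    then have "0 * (a + b * 0) + z * c = 1" using xyz a b by simp
    then show ?thesis unfolding comaximal_def by blast
  next
    case False
    have "(\<alpha> * a' + \<beta> * b') * d = 1 * d" using d unfolding a b by (simp add: algebra_simps)
    then have unimodular: "\<alpha> * a' + \<beta> * b' = 1" using False by simp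
    have "(x * a' + y * b') * d + z * c = 1" using xyz unfolding a b by (simp add: algebra_simps)
    then have "comaximal d c" unfolding comaximal_def by blast
    have "completion_mat \<alpha> \<beta> a' b' \<in> set_prod3 (G_Phi 2 (diag_one c)) (U_lw 2) (U_up 2)"
      using GL2 d_matrix_diag_one det_diag_one c completion_mat_GL[OF unimodular] by metis
    then obtain u where "comaximal (a' - b' * u) c"
      by (rule comaximal_if_completion_mat_mem_set_prod3[OF unimodular])
    then have "comaximal (d * (a' - b' * u)) c"
      using comaximal_mult[OF \<open>comaximal d c\<close>] by blast
    moreover have "d * (a' - b' * u) = a + b * (- u)"
      unfolding a b by (simp add: algebra_simps)
    ultimately have "comaximal (a + b * (- u)) c" by (simp only:)
    then show ?thesis ..
  qed
  then show "\<exists>r. gen_ideal {a + b * r, c} = UNIV"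
    unfolding gen_ideal_pair_eq_UNIV_iff .
qed

theorem theorem2p14:
  assumes "bezout_domain TYPE('a::idom)"
  shows "(stable_range_15 TYPE('a) \<longleftrightarrow>
           (\<forall>\<Phi>::'a mat. d_matrix 2 \<Phi> \<and> det \<Phi> \<noteq> 0 \<longrightarrow>
              GL 2 = set_prod3 (G_Phi 2 \<Phi>) (U_lw 2) (U_up 2))) \<and>
         ((\<forall>\<Phi>::'a mat. d_matrix 2 \<Phi> \<and> det \<Phi> \<noteq> 0 \<longrightarrow>
              GL 2 = set_prod3 (G_Phi 2 \<Phi>) (U_lw 2) (U_up 2)) \<longleftrightarrow>
          (\<forall>n\<ge>2. \<forall>\<Phi>::'a mat. d_matrix n \<Phi> \<and> det \<Phi> \<noteq> 0 \<longrightarrow>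
              GL n = set_prod3 (G_Phi n \<Phi>) (U_lw n) (U_up n)))"
proof -
  have "\<forall>n\<ge>2. \<forall>\<Phi>::'a mat. d_matrix n \<Phi> \<and> det \<Phi> \<noteq> 0 \<longrightarrow>
      GL n = set_prod3 (G_Phi n \<Phi>) (U_lw n) (U_up n)" if "stable_range_15 TYPE('a)"
    using GL_eq_set_prod3_if_stable_range_15[OF assms that] by simp
  then show ?thesis
    using stable_range_15_if_GL_2_eq_set_prod3[OF assms] by blast
qed

end
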